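(* Let $0<p<\tfrac12$ and let $Q=(q_{j,k})_{j,k\geq 0}$ be the generator on $\mathbb N_0$ given by $q_{j,j+1}=jp$, $q_{j,k}=\binom{j}{k}p^k(1-p)^{j-k}$ for $0\leq k\leq j-1$, $q_{j,j}=-(jp+1-p^j)$, and $q_{j,k}=0$ otherwise. Then $x_k=k$ ($k\geq1$) is a $(1-2p)$-invariant vector for $Q$, i.e. a positive vector $x=(x_k)_{k\geq1}$ with $\sum_{k\geq 1}q_{j,k}x_k=-(1-2p)x_j$ for all $j\geq1$, and any $(1-2p)$-invariant vector for $Q$ is a positive multiple of this one.
   Context: A $\lambda$-invariant vector for $Q$ is a positive right eigenvector of $Q$ restricted to $\mathbb N=\{1,2,\dots\}$ with eigenvalue $-\lambda$. *)

theory Defs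
  imports "HOL-Analysis.Analysis"
begin

definition Qgen :: "real \<Rightarrow> nat \<Rightarrow> nat \<Rightarrow> real" where
  "Qgen p j k =
     (if k = j + 1 then real j * p
      else if k < j then real (j choose k) * p ^ k * (1 - p) ^ (j - k)
      else if k = j then - (real j * p + 1 - p ^ j)
      else 0)"

definition lambda_invariant :: "(nat \<Rightarrow> nat \<Rightarrow> real) \<Rightarrow> real \<Rightarrow> (nat \<Rightarrow> real) \<Rightarrow> bool" where
  "lambda_invariant Q lam x \<longleftrightarrow>
     (\<forall>k\<ge>1. x k > 0) \<and>
     (\<forall>j\<ge>1. ((\<lambda>k. Q j k * x k) has_sum (- lam * x j)) {1..})"

end

theory Submission
  imports Defs
begin

text \<open>Row j of the generator vanishes beyond column j + 1, so every row equation is a finite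
  sum. On the identity vector, the binomial entries of row j (columns 1, ..., j - 1) contribute
  j p - j p^j by the binomial mean, the diagonal -(j p + 1 - p^j) j and the superdiagonal
  j p (j + 1); together -(1 - 2p) j. Uniqueness: since the superdiagonal entries q_{j,j+1} = j p
  are nonzero, row j of the eigenvalue equation determines x_{j+1} from x_1, ..., x_j, so an
  invariant vector is determined by x_1; subtracting x_1 times the identity vector therefore
  leaves zero.\<close>

lemma binomial_mean:
  fixes a b :: "'a::comm_semiring_1"
  shows "(\<Sum>k\<le>n. of_nat (n choose k) * a ^ k * b ^ (n - k) * of_nat k)
           = of_nat n * a * (a + b) ^ (n - 1)"
proof (cases n)
  case 0
  then show ?thesis by simp
next
  case (Suc m)
  have "(\<Sum>k\<le>Suc m. of_nat (Suc m choose k) * a ^ k * b ^ (Suc m - k) * of_nat k)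
      = (\<Sum>k\<le>m. of_nat (Suc m choose Suc k) * a ^ Suc k * b ^ (m - k) * of_nat (Suc k))"
    by (subst sum.atMost_Suc_shift) simp
  also have "\<dots> = (\<Sum>k\<le>m. of_nat (Suc m) * a * (of_nat (m choose k) * a ^ k * b ^ (m - k)))"
  proof (rule sum.cong)
    fix k
    have binomial_eq:
      "of_nat (Suc m choose Suc k) * of_nat (Suc k) = (of_nat (Suc m) * of_nat (m choose k) :: 'a)"
      by (metis Suc_times_binomial_eq of_nat_mult)
    have "of_nat (Suc m choose Suc k) * a ^ Suc k * b ^ (m - k) * of_nat (Suc k)
        = (of_nat (Suc m choose Suc k) * of_nat (Suc k)) * a * (a ^ k * b ^ (m - k))"
      by (simp only: power_Suc ac_simps)
    also have "\<dots> = of_nat (Suc m) * a * (of_nat (m choose k) * a ^ k * b ^ (m - k))"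
      by (simp only: binomial_eq) (simp only: ac_simps)
    finally show "of_nat (Suc m choose Suc k) * a ^ Suc k * b ^ (m - k) * of_nat (Suc k)
             = of_nat (Suc m) * a * (of_nat (m choose k) * a ^ k * b ^ (m - k))" .
  qed simp
  also have "\<dots> = of_nat (Suc m) * a * (a + b) ^ m"
    by (simp add: binomial_ring sum_distrib_left ac_simps)
  finally show ?thesis
    using Suc by simp
qed

lemma has_sum_Qgen_row_iff:
  assumes "j \<ge> 1"
  shows "((\<lambda>k. Qgen p j k * x k) has_sum s) {1..} \<longleftrightarrow> s = (\<Sum>k=1..Suc j. Qgen p j k * x k)"
proof -
  have "((\<lambda>k. Qgen p j k * x k) has_sum s) {1..}
          \<longleftrightarrow> ((\<lambda>k. Qgen p j k * x k) has_sum s) {1..Suc j}"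
    by (intro has_sum_cong_neutral) (auto simp: Qgen_def)
  also have "\<dots> \<longleftrightarrow> s = (\<Sum>k=1..Suc j. Qgen p j k * x k)"
    by (intro has_sum_finite_iff) auto
  finally show ?thesis .
qed

lemma lambda_invariant_Qgen_iff:
  "lambda_invariant (Qgen p) lam x \<longleftrightarrow>
     (\<forall>k\<ge>1. x k > 0) \<and> (\<forall>j\<ge>1. (\<Sum>k=1..Suc j. Qgen p j k * x k) = - lam * x j)"
  unfolding lambda_invariant_def by (metis has_sum_Qgen_row_iff)

lemma Qgen_row_sum_id:
  assumes "j \<ge> 1"
  shows "(\<Sum>k=1..Suc j. Qgen p j k * real k) = - (1 - 2 * p) * real j"
proof -
  define b where "b k = real (j choose k) * p ^ k * (1 - p) ^ (j - k) * real k" for k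
  have "{..j} = insert 0 (insert j {1..<j})"
    using assms by auto
  then have "(\<Sum>k\<le>j. b k) = (\<Sum>k=1..<j. b k) + real j * p ^ j"
    using assms by (simp add: b_def)
  moreover have "(\<Sum>k=1..<j. Qgen p j k * real k) = (\<Sum>k=1..<j. b k)"
    by (intro sum.cong) (auto simp: Qgen_def b_def)
  ultimately have binomial_part: "(\<Sum>k=1..<j. Qgen p j k * real k) = real j * p - real j * p ^ j"
    using binomial_mean[of j p "1 - p"] by (simp add: b_def)
  have "(\<Sum>k=1..Suc j. Qgen p j k * real k)
      = (\<Sum>k=1..<j. Qgen p j k * real k) + Qgen p j j * real j + Qgen p j (Suc j) * real (Suc j)"
    using assms by (simp add: sum.atLeastLessThan_Suc flip: atLeastLessThanSuc_atLeastAtMost)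
  also have "\<dots> = - (1 - 2 * p) * real j"
    unfolding binomial_part by (simp add: Qgen_def algebra_simps)
  finally show ?thesis .
qed

lemma eigenvector_superdiagonal_eq_0:
  fixes Q :: "nat \<Rightarrow> nat \<Rightarrow> 'a::field"
  assumes superdiag: "\<And>j. j \<ge> 1 \<Longrightarrow> Q j (Suc j) \<noteq> 0"
    and eigen: "\<And>j. j \<ge> 1 \<Longrightarrow> (\<Sum>k=1..Suc j. Q j k * y k) = c * y j"
    and "y 1 = 0" and "k \<ge> 1"
  shows "y k = 0"
  using \<open>k \<ge> 1\<close>
proof (induction k rule: less_induct)
  case (less k)
  show ?case
  proof (cases "k = 1")
    case True
    with \<open>y 1 = 0\<close> show ?thesis by simp
  next
    case False
    define j where "j = k - 1"
    have k: "k = Suc j" and j: "j \<ge> 1"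
      using less.prems False by (auto simp: j_def)
    have "(\<Sum>i=1..j. Q j i * y i) = 0" "y j = 0"
      using less.IH j k by auto
    with eigen[OF j] have "Q j (Suc j) * y (Suc j) = 0"
      by simp
    with superdiag[OF j] k show ?thesis
      by simp
  qed
qed

lemma Qgen_eigenvector_eq_multiple_id:
  assumes "0 < p"
    and eigen: "\<And>j. j \<ge> 1 \<Longrightarrow> (\<Sum>k=1..Suc j. Qgen p j k * x k) = - (1 - 2 * p) * x j"
    and "k \<ge> 1"
  shows "x k = x 1 * real k"
proof -
  define y where "y k = x k - x 1 * real k" for k
  have "y k = 0"
  proof (rule eigenvector_superdiagonal_eq_0[OF _ _ _ \<open>k \<ge> 1\<close>])
    show "Qgen p j (Suc j) \<noteq> 0" if "j \<ge> 1" for j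
      using that \<open>0 < p\<close> by (simp add: Qgen_def)
    show "(\<Sum>k=1..Suc j. Qgen p j k * y k) = - (1 - 2 * p) * y j" if "j \<ge> 1" for j
    proof -
      have "(\<Sum>k=1..Suc j. Qgen p j k * y k)
          = (\<Sum>k=1..Suc j. Qgen p j k * x k) - x 1 * (\<Sum>k=1..Suc j. Qgen p j k * real k)"
        unfolding y_def right_diff_distrib sum_subtractf sum_distrib_left by (simp only: ac_simps)
      also have "\<dots> = - (1 - 2 * p) * y j"
        unfolding eigen[OF that] Qgen_row_sum_id[OF that] y_def by (simp add: algebra_simps)
      finally show ?thesis .
    qed
    show "y 1 = 0"
      by (simp add: y_def)
  qed
  then show ?thesis
    by (simp add: y_def)
qed

theorem lemma3:
  fixes p :: real
  assumes "0 < p" and "p < 1/2"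
  shows "lambda_invariant (Qgen p) (1 - 2*p) (\<lambda>k. real k) \<and>
         (\<forall>x. lambda_invariant (Qgen p) (1 - 2*p) x \<longrightarrow>
              (\<exists>c>0. \<forall>k\<ge>1. x k = c * real k))"
proof (intro conjI allI impI)
  show "lambda_invariant (Qgen p) (1 - 2*p) (\<lambda>k. real k)"
    unfolding lambda_invariant_Qgen_iff using Qgen_row_sum_id by (simp del: sum.cl_ivl_Suc)
next
  fix x
  assume "lambda_invariant (Qgen p) (1 - 2*p) x"
  then have "x 1 > 0"
    and eigen: "\<And>j. j \<ge> 1 \<Longrightarrow> (\<Sum>k=1..Suc j. Qgen p j k * x k) = - (1 - 2*p) * x j"
    by (auto simp: lambda_invariant_Qgen_iff)
  moreover have "\<forall>k\<ge>1. x k = x 1 * real k"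
    using Qgen_eigenvector_eq_multiple_id[OF \<open>0 < p\<close> eigen] by blast
  ultimately show "\<exists>c>0. \<forall>k\<ge>1. x k = c * real k"
    by blast
qed

end
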